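(* Let $\eta_{i,j}(e)$ (with $i\neq j$) be a subexpression of the irredundant clique-width $k$-expression $e_G$ and let $C,N\in[0,\mathcal{N}]^{k\times q}$. Let $N_e\in[0,\mathcal{N}]^{k\times q}$ be defined by $N_e[i,a]=\min(\mathcal{N},N[i,a]+C[j,a])$ and $N_e[j,a]=\min(\mathcal{N},N[j,a]+C[i,a])$ for every color $a$, and $N_e[h,a]=N[h,a]$ for every $h\in[1,k]\setminus\{i,j\}$ and every color $a$. Then $\lambda(\eta_{i,j}(e),C,N)=\lambda(e,C,N_e)$.
   Context: Weight set: $(\mathrm{Weights},\preceq,\circledast)$ where $\preceq$ is a total order with a maximum element $\mathrm{Error}$, $\min$ is the minimum w.r.t. $\preceq$ (minimum of an empty set is $\mathrm{Error}$), and $\circledast$ is commutative, associative, has a neutral element, has absorbing element $\mathrm{Error}$, and is monotone. A color-counting 1-locally checkable problem is given by a graph $G$, colors $\mathrm{Colors}=\{a_1,\ldots,a_q\}$, nonempty lists $L_v\subseteq\mathrm{Colors}$, weights $w_{v,a}\in\mathrm{Weights}\setminus\{\mathrm{Error}\}$ ($a\in L_v$), and a function $check(v,a,n_1,\ldots,n_q)\in\{\mathrm{True},\mathrm{False}\}$. $\mathcal{N}\in[1,|V(G)|]$ is an integer with $check(v,a,n_1,\ldots,n_q)=check(v,a,\min(\mathcal{N},n_1),\ldots,\min(\mathcal{N},n_q))$ always. $[x,y]=\{x,\ldots,y\}$. $e_G$ is a clique-width $k$-expression of $G$ (operations $i(v)$, $\oplus$, $\eta_{i,j}$ joining all label-$i$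 to all label-$j$ vertices, $\rho_{i\to j}$), irredundant (whenever $\eta_{i,j}$ is applied there are no existing edges between label-$i$ and label-$j$ vertices), in which every relabeling $\rho_{i\to j}(e)$ has some vertex of $G_e$ of label $j$. For a subexpression $e$, $G_e$ is its labeled graph and $\ell_e(v)$ the label of $v$ in $G_e$. For $C,N\in[0,\mathcal{N}]^{k\times q}$ (rows = labels, columns = colors), a coloring $c$ of $G_e$ with $c(v)\in L_v$ for all $v$ is a $(C,N)$-coloring of $G_e$ if (C1) $\min(\mathcal{N},|\{v\in V(G_e): c(v)=a,\ \ell_e(v)=i\}|)=C[i,a]$ for all $i,a$; and (C2) for all $v\in V(G_e)$, $check(v,c(v),n_1,\ldots,n_q)$ holds with $n_j=\min(\mathcal{N},N[\ell_e(v),a_j]+|\{u\in N_{G_e}(v):c(u)=a_j\}|)$. $\lambda(e,C,N)$ is the minimum of $\circledast_{v\in V(G_e)}w_{v,c(v)}$ over all $(C,N)$-colorings $c$ of $G_e$ ($\mathrm{Error}$ if none). *)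

theory Defs
  imports Main
begin

text \<open>Vertex creation i(v), disjoint union, join eta_{i,j}, relabel rho_{i->j}.
  Labels are natural numbers; in a k-expression they lie in {1..k}.\<close>
datatype 'v cwexp =
    Vert nat 'v
  | Union "'v cwexp" "'v cwexp"
  | Join nat nat "'v cwexp"
  | Relabel nat nat "'v cwexp"

fun verts :: "'v cwexp \<Rightarrow> 'v set" where
  "verts (Vert i v) = {v}"
| "verts (Union e1 e2) = verts e1 \<union> verts e2"
| "verts (Join i j e) = verts e"
| "verts (Relabel i j e) = verts e"

text \<open>Label of a vertex in the labeled graph G_e (meaningful only on verts e).\<close>
fun lab :: "'v cwexp \<Rightarrow> 'v \<Rightarrow> nat" where
  "lab (Vert i v) u = i"
| "lab (Union e1 e2) u = (if u \<in> verts e1 then lab e1 u else lab e2 u)"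
| "lab (Join i j e) u = lab e u"
| "lab (Relabel i j e) u = (if lab e u = i then j else lab e u)"

text \<open>Edges of G_e as a symmetric relation.\<close>
fun edges :: "'v cwexp \<Rightarrow> ('v \<times> 'v) set" where
  "edges (Vert i v) = {}"
| "edges (Union e1 e2) = edges e1 \<union> edges e2"
| "edges (Join i j e) = edges e \<union>
     {(u, v). u \<in> verts e \<and> v \<in> verts e \<and> u \<noteq> v \<and>
        ((lab e u = i \<and> lab e v = j) \<or> (lab e u = j \<and> lab e v = i))}"
| "edges (Relabel i j e) = edges e"

definition nbrs :: "'v cwexp \<Rightarrow> 'v \<Rightarrow> 'v set" where
  "nbrs e v = {u. (v, u) \<in> edges e}"

fun subexps :: "'v cwexp \<Rightarrow> 'v cwexp set" where
  "subexps (Vert i v) = {Vert i v}"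
| "subexps (Union e1 e2) = insert (Union e1 e2) (subexps e1 \<union> subexps e2)"
| "subexps (Join i j e) = insert (Join i j e) (subexps e)"
| "subexps (Relabel i j e) = insert (Relabel i j e) (subexps e)"

fun cw_kexp :: "nat \<Rightarrow> 'v cwexp \<Rightarrow> bool" where
  "cw_kexp k (Vert i v) = (i \<in> {1..k})"
| "cw_kexp k (Union e1 e2) = (cw_kexp k e1 \<and> cw_kexp k e2 \<and> verts e1 \<inter> verts e2 = {})"
| "cw_kexp k (Join i j e) = (i \<in> {1..k} \<and> j \<in> {1..k} \<and> cw_kexp k e)"
| "cw_kexp k (Relabel i j e) = (i \<in> {1..k} \<and> j \<in> {1..k} \<and> cw_kexp k e)"

definition irredundant :: "'v cwexp \<Rightarrow> bool" where
  "irredundant eG \<longleftrightarrow> (\<forall>i j e. Join i j e \<in> subexps eG \<longrightarrow>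
     (\<forall>u v. (u, v) \<in> edges e \<longrightarrow> \<not> (lab e u = i \<and> lab e v = j)))"

definition relabel_target_present :: "'v cwexp \<Rightarrow> bool" where
  "relabel_target_present eG \<longleftrightarrow> (\<forall>i j e. Relabel i j e \<in> subexps eG \<longrightarrow>
     (\<exists>v \<in> verts e. lab e v = j))"

definition weight_set :: "'w::linorder \<Rightarrow> ('w \<Rightarrow> 'w \<Rightarrow> 'w) \<Rightarrow> 'w \<Rightarrow> bool" where
  "weight_set err mult one \<longleftrightarrow>
     (\<forall>x. x \<le> err) \<and> comm_monoid mult one \<and> (\<forall>x. mult err x = err) \<and>
     (\<forall>x y z. x \<le> y \<longrightarrow> mult x z \<le> mult y z)"

definition wmin :: "'w::linorder \<Rightarrow> 'w set \<Rightarrow> 'w" where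
  "wmin err S = (if S = {} then err else Min S)"

text \<open>Colors are the elements of a finite type 'c; matrices are functions label => color => nat.\<close>
definition bounded_matrix :: "nat \<Rightarrow> nat \<Rightarrow> (nat \<Rightarrow> 'c \<Rightarrow> nat) \<Rightarrow> bool" where
  "bounded_matrix k NN M \<longleftrightarrow> (\<forall>i \<in> {1..k}. \<forall>a. M i a \<le> NN)"

definition CN_coloring ::
  "nat \<Rightarrow> nat \<Rightarrow> ('v \<Rightarrow> 'c set) \<Rightarrow> ('v \<Rightarrow> 'c \<Rightarrow> ('c \<Rightarrow> nat) \<Rightarrow> bool) \<Rightarrow>
   'v cwexp \<Rightarrow> (nat \<Rightarrow> 'c \<Rightarrow> nat) \<Rightarrow> (nat \<Rightarrow> 'c \<Rightarrow> nat) \<Rightarrow> ('v \<Rightarrow> 'c) \<Rightarrow> bool" where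
  "CN_coloring k NN L chk e C N c \<longleftrightarrow>
     (\<forall>v \<in> verts e. c v \<in> L v) \<and>
     (\<forall>i \<in> {1..k}. \<forall>a. min NN (card {v \<in> verts e. c v = a \<and> lab e v = i}) = C i a) \<and>
     (\<forall>v \<in> verts e. chk v (c v)
        (\<lambda>a. min NN (N (lab e v) a + card {u \<in> nbrs e v. c u = a})))"

definition coloring_weight ::
  "('w \<Rightarrow> 'w \<Rightarrow> 'w) \<Rightarrow> 'w \<Rightarrow> ('v \<Rightarrow> 'c \<Rightarrow> 'w) \<Rightarrow> 'v cwexp \<Rightarrow> ('v \<Rightarrow> 'c) \<Rightarrow> 'w" where
  "coloring_weight mult one w e c = comm_monoid_set.F mult one (\<lambda>v. w v (c v)) (verts e)"

definition lam ::
  "nat \<Rightarrow> nat \<Rightarrow> ('v \<Rightarrow> 'c set) \<Rightarrow> ('v \<Rightarrow> 'c \<Rightarrow> 'w::linorder) \<Rightarrow>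
   ('v \<Rightarrow> 'c \<Rightarrow> ('c \<Rightarrow> nat) \<Rightarrow> bool) \<Rightarrow> 'w \<Rightarrow> ('w \<Rightarrow> 'w \<Rightarrow> 'w) \<Rightarrow> 'w \<Rightarrow>
   'v cwexp \<Rightarrow> (nat \<Rightarrow> 'c \<Rightarrow> nat) \<Rightarrow> (nat \<Rightarrow> 'c \<Rightarrow> nat) \<Rightarrow> 'w" where
  "lam k NN L w chk err mult one e C N =
     wmin err {coloring_weight mult one w e c | c. CN_coloring k NN L chk e C N c}"

definition join_N :: "nat \<Rightarrow> nat \<Rightarrow> nat \<Rightarrow> (nat \<Rightarrow> 'c \<Rightarrow> nat) \<Rightarrow> (nat \<Rightarrow> 'c \<Rightarrow> nat) \<Rightarrow> nat \<Rightarrow> 'c \<Rightarrow> nat" where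
  "join_N NN i j C N h a =
     (if h = i then min NN (N i a + C j a)
      else if h = j then min NN (N j a + C i a)
      else N h a)"

end

theory Submission
  imports Defs
begin

text \<open>The join \<open>\<eta>\<^sub>i\<^sub>,\<^sub>j\<close> changes neither the vertices nor the labels, so both sides
  minimise the same weights, and it suffices that the \<open>(C, N)\<close>-colorings of
  \<open>\<eta>\<^sub>i\<^sub>,\<^sub>j(e)\<close> are exactly the \<open>(C, N\<^sub>e)\<close>-colorings of \<open>e\<close>. In (C2), a label-\<open>i\<close> vertex gains all label-\<open>j\<close> vertices as
  neighbours, none of which was a neighbour before (irredundance); by (C1) their number of
  color \<open>a\<close>, truncated at \<open>\<N>\<close>, is \<open>C[j,a]\<close>, and the truncation is harmless since
  \<open>min \<N> (x + min \<N> y) = min \<N> (x + y)\<close>. Label-\<open>j\<close> vertices are symmetric, and all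
  other vertices keep their neighbourhoods.\<close>

lemma finite_verts: "finite (verts e)"
  by (induction e) auto

lemma edges_subset_verts: "edges e \<subseteq> verts e \<times> verts e"
  by (induction e) auto

lemma edges_sym: "(u, v) \<in> edges e \<Longrightarrow> (v, u) \<in> edges e"
  by (induction e) auto

lemma finite_nbrs: "finite (nbrs e v)"
  using edges_subset_verts[of e] finite_verts[of e]
  by (auto simp: nbrs_def intro: finite_subset)

lemma Join_labels_in_range:
  "Join i j e \<in> subexps eG \<Longrightarrow> cw_kexp k eG \<Longrightarrow> i \<in> {1..k} \<and> j \<in> {1..k}"
  by (induction eG) auto

lemma nbrs_Join_commute: "nbrs (Join i j e) v = nbrs (Join j i e) v"
  by (auto simp: nbrs_def)

lemma nbrs_Join_other:
  "lab e v \<noteq> i \<Longrightarrow> lab e v \<noteq> j \<Longrightarrow> nbrs (Join i j e) v = nbrs e v"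
  by (auto simp: nbrs_def)

lemma nbrs_Join_left:
  "v \<in> verts e \<Longrightarrow> lab e v = i \<Longrightarrow> i \<noteq> j \<Longrightarrow>
   nbrs (Join i j e) v = nbrs e v \<union> {u \<in> verts e. lab e u = j}"
  by (auto simp: nbrs_def)

lemma card_colored_nbrs_Join_left:
  assumes no_edges: "\<forall>u. (v, u) \<in> edges e \<longrightarrow> lab e u \<noteq> j"
    and "v \<in> verts e" "lab e v = i" "i \<noteq> j"
  shows "card {u \<in> nbrs (Join i j e) v. c u = a} =
         card {u \<in> nbrs e v. c u = a} + card {u \<in> verts e. c u = a \<and> lab e u = j}"
proof -
  have "{u \<in> nbrs (Join i j e) v. c u = a} =
        {u \<in> nbrs e v. c u = a} \<union> {u \<in> verts e. c u = a \<and> lab e u = j}"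
    using nbrs_Join_left[OF assms(2-4)] by blast
  moreover have "{u \<in> nbrs e v. c u = a} \<inter> {u \<in> verts e. c u = a \<and> lab e u = j} = {}"
    using no_edges by (auto simp: nbrs_def)
  ultimately show ?thesis
    using finite_nbrs[of e v] finite_verts[of e] by (simp add: card_Un_disjoint)
qed

lemma min_min_add_min: "min (n::nat) (min n (x + min n y) + z) = min n (x + z + y)"
  by linarith

lemma join_N_commute: "i \<noteq> j \<Longrightarrow> join_N NN i j C N = join_N NN j i C N"
  by (auto simp: join_N_def fun_eq_iff)

lemma truncated_nbr_count_Join_left:
  assumes "\<forall>u. (v, u) \<in> edges e \<longrightarrow> lab e u \<noteq> j"
    and "v \<in> verts e" "lab e v = i" "i \<noteq> j"
    and count_j: "min NN (card {u \<in> verts e. c u = a \<and> lab e u = j}) = C j a"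
  shows "min NN (N i a + card {u \<in> nbrs (Join i j e) v. c u = a}) =
         min NN (join_N NN i j C N i a + card {u \<in> nbrs e v. c u = a})"
proof -
  let ?J = "card {u \<in> verts e. c u = a \<and> lab e u = j}"
  have "min NN (N i a + card {u \<in> nbrs (Join i j e) v. c u = a}) =
        min NN (N i a + card {u \<in> nbrs e v. c u = a} + ?J)"
    unfolding card_colored_nbrs_Join_left[OF assms(1-4)] by (simp add: add.assoc)
  also have "\<dots> = min NN (min NN (N i a + min NN ?J) + card {u \<in> nbrs e v. c u = a})"
    by (rule min_min_add_min[symmetric])
  also have "\<dots> = min NN (join_N NN i j C N i a + card {u \<in> nbrs e v. c u = a})"
    by (simp add: count_j join_N_def)
  finally show ?thesis .
qed

lemma truncated_nbr_count_Join:
  assumes irr: "\<forall>u v. (u, v) \<in> edges e \<longrightarrow> \<not> (lab e u = i \<and> lab e v = j)"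
    and "i \<noteq> j" and v: "v \<in> verts e"
    and count_i: "min NN (card {u \<in> verts e. c u = a \<and> lab e u = i}) = C i a"
    and count_j: "min NN (card {u \<in> verts e. c u = a \<and> lab e u = j}) = C j a"
  shows "min NN (N (lab e v) a + card {u \<in> nbrs (Join i j e) v. c u = a}) =
         min NN (join_N NN i j C N (lab e v) a + card {u \<in> nbrs e v. c u = a})"
proof -
  consider "lab e v = i" | "lab e v = j" | "lab e v \<noteq> i" "lab e v \<noteq> j" by blast
  then show ?thesis
  proof cases
    case 1
    have "\<forall>u. (v, u) \<in> edges e \<longrightarrow> lab e u \<noteq> j"
      using irr 1 by blast
    from truncated_nbr_count_Join_left[where C = C, OF this v 1 \<open>i \<noteq> j\<close> count_j] show ?thesis
      using 1 by simp
  next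
    case 2
    have "\<forall>u. (v, u) \<in> edges e \<longrightarrow> lab e u \<noteq> i"
      using irr 2 edges_sym[of v _ e] by metis
    from truncated_nbr_count_Join_left[where C = C, OF this v 2 _ count_i] show ?thesis
      using 2 \<open>i \<noteq> j\<close> by (simp add: nbrs_Join_commute[of i j] join_N_commute[of i j])
  next
    case 3
    then show ?thesis by (simp add: nbrs_Join_other join_N_def)
  qed
qed

lemma CN_coloring_Join_iff:
  assumes irr: "\<forall>u v. (u, v) \<in> edges e \<longrightarrow> \<not> (lab e u = i \<and> lab e v = j)"
    and "i \<noteq> j" and "i \<in> {1..k}" and "j \<in> {1..k}"
  shows "CN_coloring k NN L chk (Join i j e) C N c \<longleftrightarrow>
         CN_coloring k NN L chk e C (join_N NN i j C N) c"
proof -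
  have "(\<lambda>a. min NN (N (lab e v) a + card {u \<in> nbrs (Join i j e) v. c u = a})) =
        (\<lambda>a. min NN (join_N NN i j C N (lab e v) a + card {u \<in> nbrs e v. c u = a}))"
    if "v \<in> verts e"
      and counts: "\<forall>h \<in> {1..k}. \<forall>a. min NN (card {u \<in> verts e. c u = a \<and> lab e u = h}) = C h a"
    for v
  proof
    fix a
    show "min NN (N (lab e v) a + card {u \<in> nbrs (Join i j e) v. c u = a}) =
          min NN (join_N NN i j C N (lab e v) a + card {u \<in> nbrs e v. c u = a})"
      using counts \<open>i \<in> {1..k}\<close> \<open>j \<in> {1..k}\<close>
      by (intro truncated_nbr_count_Join[OF irr \<open>i \<noteq> j\<close> \<open>v \<in> verts e\<close>]) blast+
  qed
  then show ?thesis
    unfolding CN_coloring_def by auto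
qed

theorem lemma4:
  fixes eG e :: "'v cwexp" and k NN i j :: nat
    and L :: "'v \<Rightarrow> ('c::finite) set" and w :: "'v \<Rightarrow> 'c \<Rightarrow> 'w::linorder"
    and chk :: "'v \<Rightarrow> 'c \<Rightarrow> ('c \<Rightarrow> nat) \<Rightarrow> bool"
    and err one :: 'w and mult :: "'w \<Rightarrow> 'w \<Rightarrow> 'w"
    and C N :: "nat \<Rightarrow> 'c \<Rightarrow> nat"
  assumes "weight_set err mult one"
    and "cw_kexp k eG" and "irredundant eG" and "relabel_target_present eG"
    and "\<forall>v \<in> verts eG. L v \<noteq> {} \<and> (\<forall>a \<in> L v. w v a \<noteq> err)"
    and "1 \<le> NN" and "NN \<le> card (verts eG)"
    and "\<forall>v a n. chk v a n = chk v a (\<lambda>b. min NN (n b))"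
    and "Join i j e \<in> subexps eG" and "i \<noteq> j"
    and "bounded_matrix k NN C" and "bounded_matrix k NN N"
  shows "lam k NN L w chk err mult one (Join i j e) C N =
         lam k NN L w chk err mult one e C (join_N NN i j C N)"
proof -
  have "\<forall>u v. (u, v) \<in> edges e \<longrightarrow> \<not> (lab e u = i \<and> lab e v = j)"
    using \<open>irredundant eG\<close> \<open>Join i j e \<in> subexps eG\<close> unfolding irredundant_def by blast
  moreover have "i \<in> {1..k}" "j \<in> {1..k}"
    using Join_labels_in_range \<open>cw_kexp k eG\<close> \<open>Join i j e \<in> subexps eG\<close> by blast+
  ultimately have "CN_coloring k NN L chk (Join i j e) C N =
                   CN_coloring k NN L chk e C (join_N NN i j C N)"
    using CN_coloring_Join_iff \<open>i \<noteq> j\<close> by blast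
  moreover have "coloring_weight mult one w (Join i j e) = coloring_weight mult one w e"
    by (simp add: coloring_weight_def fun_eq_iff)
  ultimately show ?thesis
    unfolding lam_def by simp
qed

end
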